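(* Let $0<\gamma_\ell<\gamma_{\ell+1}<\infty$ and define $$b_\ell=\frac{\log(\log_2(1+\gamma_{\ell+1}))-\log(\log_2(1+\gamma_\ell))}{\log\gamma_{\ell+1}-\log\gamma_\ell},\qquad a_\ell=e^{\log(\log_2(1+\gamma_{\ell+1}))-b_\ell\log\gamma_{\ell+1}},$$ so that $\varphi_\ell(\gamma)=a_\ell\gamma^{b_\ell}$ is the unique function of this form with $\varphi_\ell(\gamma_\ell)=\log_2(1+\gamma_\ell)$ and $\varphi_\ell(\gamma_{\ell+1})=\log_2(1+\gamma_{\ell+1})$. Then $$\varphi_\ell(\gamma)\ge\log_2(1+\gamma)\ \text{for }\gamma\in[0,\gamma_\ell],\qquad \varphi_\ell(\gamma)\le\log_2(1+\gamma)\ \text{for }\gamma\in[\gamma_\ell,\gamma_{\ell+1}],\qquad \varphi_\ell(\gamma)>\log_2(1+\gamma)\ \text{for }\gamma\in(\gamma_{\ell+1},\infty).$$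
   Context: $\log$ denotes the natural logarithm. *)

theory Defs
  imports Complex_Main
begin

definition fit_b :: "real \<Rightarrow> real \<Rightarrow> real" where
  "fit_b g1 g2 = (ln (log 2 (1 + g2)) - ln (log 2 (1 + g1))) / (ln g2 - ln g1)"

definition fit_a :: "real \<Rightarrow> real \<Rightarrow> real" where
  "fit_a g1 g2 = exp (ln (log 2 (1 + g2)) - fit_b g1 g2 * ln g2)"

definition fit_phi :: "real \<Rightarrow> real \<Rightarrow> real \<Rightarrow> real" where
  "fit_phi g1 g2 g = fit_a g1 g2 * g powr fit_b g1 g2"

end

theory Submission
  imports Defs
begin

text \<open>In the coordinates \<open>t = ln \<gamma>\<close> a power law \<open>a * \<gamma> powr b\<close> becomes the straight line
  \<open>ln a + b * t\<close>, so \<open>fit_phi\<close> becomes the chord of \<open>log_rate t = ln (log 2 (1 + exp t))\<close>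
  through \<open>ln g1\<close> and \<open>ln g2\<close>. The derivative of \<open>log_rate\<close> is strictly decreasing, hence
  \<open>log_rate\<close> lies above this chord between the two points and strictly below it outside;
  exponentiating gives the three claims.\<close>

lemma strictly_decreasing_derivative_two_zeros:
  fixes h h' :: "real \<Rightarrow> real"
  assumes deriv: "\<And>t. (h has_real_derivative h' t) (at t)"
    and decreasing: "\<And>s t. s < t \<Longrightarrow> h' t < h' s"
    and "a < b" and zero_a: "h a = 0" and zero_b: "h b = 0"
  shows "t < a \<Longrightarrow> h t < 0"
    and "a \<le> t \<Longrightarrow> t \<le> b \<Longrightarrow> 0 \<le> h t"
    and "b < t \<Longrightarrow> h t < 0"
proof -
  obtain e where "a < e" "e < b" and "h b - h a = (b - a) * h' e"
    using MVT2[OF \<open>a < b\<close>] deriv by blast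
  with \<open>a < b\<close> zero_a zero_b have e: "a < e" "e < b" "h' e = 0" by auto
  have cont: "continuous_on S h" for S
    using deriv by (blast intro: DERIV_continuous_on has_field_derivative_at_within)
  have increasing_before: "h s < h t" if "s < t" "t \<le> e" for s t
    using DERIV_pos_imp_increasing_open[OF \<open>s < t\<close> _ cont] deriv decreasing e(3) that
    by (metis order_less_le_trans)
  have decreasing_after: "h t < h s" if "s < t" "e \<le> s" for s t
    using DERIV_neg_imp_decreasing_open[OF \<open>s < t\<close> _ cont] deriv decreasing e(3) that
    by (metis order_le_less_trans)
  show "t < a \<Longrightarrow> h t < 0"
    using increasing_before[of t a] e zero_a by simp
  show "b < t \<Longrightarrow> h t < 0"
    using decreasing_after[of b t] e zero_b by simp
  show "0 \<le> h t" if "a \<le> t" "t \<le> b"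
  proof (cases "t \<le> e")
    case True
    then show ?thesis
      using increasing_before[of a t] zero_a \<open>a \<le> t\<close> by (cases "a = t") auto
  next
    case False
    then show ?thesis
      using decreasing_after[of t b] zero_b \<open>t \<le> b\<close> by (cases "t = b") auto
  qed
qed

lemma chord_of_strictly_decreasing_derivative:
  fixes f f' :: "real \<Rightarrow> real"
  assumes deriv: "\<And>t. (f has_real_derivative f' t) (at t)"
    and decreasing: "\<And>s t. s < t \<Longrightarrow> f' t < f' s"
    and "a < b"
  defines "m \<equiv> (f b - f a) / (b - a)"
  shows "t < a \<Longrightarrow> f t < f b + m * (t - b)"
    and "a \<le> t \<Longrightarrow> t \<le> b \<Longrightarrow> f b + m * (t - b) \<le> f t"
    and "b < t \<Longrightarrow> f t < f b + m * (t - b)"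
proof -
  define h where "h t = f t - (f b + m * (t - b))" for t
  have h_deriv: "(h has_real_derivative f' t - m) (at t)" for t
    unfolding h_def by (auto intro!: derivative_eq_intros deriv)
  have "h a = 0" "h b = 0"
    using \<open>a < b\<close> by (simp_all add: h_def m_def field_simps)
  note sign = strictly_decreasing_derivative_two_zeros[OF h_deriv _ \<open>a < b\<close> this]
  show "t < a \<Longrightarrow> f t < f b + m * (t - b)"
    and "a \<le> t \<Longrightarrow> t \<le> b \<Longrightarrow> f b + m * (t - b) \<le> f t"
    and "b < t \<Longrightarrow> f t < f b + m * (t - b)"
    using sign decreasing unfolding h_def by auto
qed

lemma mult_ln_add_one_div_self_strict_mono:
  fixes x y :: real
  assumes "0 < x" "x < y"
  shows "(1 + x) * ln (1 + x) / x < (1 + y) * ln (1 + y) / y"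
proof (rule DERIV_pos_imp_increasing[OF \<open>x < y\<close>])
  fix z :: real
  assume "x \<le> z"
  with \<open>0 < x\<close> have "0 < z" by simp
  then have "((\<lambda>z. (1 + z) * ln (1 + z) / z) has_real_derivative (z - ln (1 + z)) / z\<^sup>2) (at z)"
    by (auto intro!: derivative_eq_intros) (simp add: field_simps power2_eq_square)
  moreover have "0 < (z - ln (1 + z)) / z\<^sup>2"
    using ln_add_one_self_less_self[OF \<open>0 < z\<close>] \<open>0 < z\<close> by simp
  ultimately show "\<exists>D. ((\<lambda>z. (1 + z) * ln (1 + z) / z) has_real_derivative D) (at z) \<and> 0 < D"
    by blast
qed

definition log_rate :: "real \<Rightarrow> real" where
  "log_rate t = ln (log 2 (1 + exp t))"

definition log_rate' :: "real \<Rightarrow> real" where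
  "log_rate' t = exp t / ((1 + exp t) * ln (1 + exp t))"

lemma log_rate_has_real_derivative: "(log_rate has_real_derivative log_rate' t) (at t)"
proof -
  have "0 < ln (1 + exp t)"
    by (simp add: ln_gt_zero)
  then show ?thesis
    unfolding log_rate_def log_rate'_def log_def
    by (auto intro!: derivative_eq_intros) (simp add: field_simps add_pos_pos)
qed

lemma log_rate'_strict_antimono:
  assumes "s < t"
  shows "log_rate' t < log_rate' s"
proof -
  have "0 < (1 + exp s) * ln (1 + exp s) / exp s"
    by (simp add: ln_gt_zero add_pos_pos)
  moreover have "(1 + exp s) * ln (1 + exp s) / exp s < (1 + exp t) * ln (1 + exp t) / exp t"
    using mult_ln_add_one_div_self_strict_mono[of "exp s" "exp t"] assms by simp
  ultimately show ?thesis
    using less_imp_inverse_less unfolding log_rate'_def by fastforce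
qed

lemma log_rate_ln:
  assumes "0 < g"
  shows "log_rate (ln g) = ln (log 2 (1 + g))"
  using assms by (simp add: log_rate_def)

lemma exp_log_rate_ln:
  assumes "0 < g"
  shows "exp (log_rate (ln g)) = log 2 (1 + g)"
  using assms by (simp add: log_rate_ln)

lemma fit_b_eq_log_rate_slope:
  assumes "0 < g1" "0 < g2"
  shows "fit_b g1 g2 = (log_rate (ln g2) - log_rate (ln g1)) / (ln g2 - ln g1)"
  using assms by (simp add: fit_b_def log_rate_ln)

lemma fit_phi_eq_exp_line:
  assumes "0 < g2" "0 < g"
  shows "fit_phi g1 g2 g = exp (log_rate (ln g2) + fit_b g1 g2 * (ln g - ln g2))"
  using assms
  by (simp add: fit_phi_def fit_a_def powr_def log_rate_ln exp_add[symmetric] algebra_simps)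

theorem proposition2:
  fixes g1 g2 :: real
  assumes "0 < g1" and "g1 < g2"
  shows "(\<forall>g. 0 \<le> g \<and> g \<le> g1 \<longrightarrow> fit_phi g1 g2 g \<ge> log 2 (1 + g))
       \<and> (\<forall>g. g1 \<le> g \<and> g \<le> g2 \<longrightarrow> fit_phi g1 g2 g \<le> log 2 (1 + g))
       \<and> (\<forall>g. g2 < g \<longrightarrow> fit_phi g1 g2 g > log 2 (1 + g))"
proof -
  have "0 < g2" "ln g1 < ln g2"
    using assms by simp_all
  define line where "line t = log_rate (ln g2) + fit_b g1 g2 * (t - ln g2)" for t
  note chord = chord_of_strictly_decreasing_derivative[OF log_rate_has_real_derivative
      log_rate'_strict_antimono \<open>ln g1 < ln g2\<close>,
      folded fit_b_eq_log_rate_slope[OF \<open>0 < g1\<close> \<open>0 < g2\<close>] line_def]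
  have in_log_coordinates: "fit_phi g1 g2 g = exp (line (ln g))" "log 2 (1 + g) = exp (log_rate (ln g))"
    if "0 < g" for g
    using that \<open>0 < g2\<close> by (simp_all add: fit_phi_eq_exp_line exp_log_rate_ln line_def)
  have "line (ln g1) = log_rate (ln g1)"
    using \<open>ln g1 < ln g2\<close>
    by (simp add: line_def fit_b_eq_log_rate_slope[OF \<open>0 < g1\<close> \<open>0 < g2\<close>] field_simps)
  then have "fit_phi g1 g2 g \<ge> log 2 (1 + g)" if "0 < g" "g \<le> g1" for g
    using chord(1)[of "ln g"] that \<open>0 < g1\<close>
    by (cases "g = g1") (auto simp: in_log_coordinates less_imp_le)
  \<comment> \<open>at \<open>g = 0\<close> both sides vanish, since \<open>0 powr b = 0\<close> for every \<open>b\<close>\<close>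
  then have below: "fit_phi g1 g2 g \<ge> log 2 (1 + g)" if "0 \<le> g" "g \<le> g1" for g
    using that by (cases "g = 0") (auto simp: fit_phi_def)
  have between: "fit_phi g1 g2 g \<le> log 2 (1 + g)" if "g1 \<le> g" "g \<le> g2" for g
    using chord(2)[of "ln g"] that \<open>0 < g1\<close> by (simp add: in_log_coordinates)
  have above: "fit_phi g1 g2 g > log 2 (1 + g)" if "g2 < g" for g
    using chord(3)[of "ln g"] that \<open>0 < g2\<close> by (simp add: in_log_coordinates)
  show ?thesis
    using below between above by blast
qed

end
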